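(* Let $\pi$ be the probability distribution on $\mathbb{N}^+=\{1,2,\dots\}$ with $\pi(m)\propto \exp\{-h(m)\}$ for $m\in\mathbb{N}^+$ (and $\pi(m)=0$ for $m\notin\mathbb{N}^+$), where $h:\mathbb{N}^+\to\mathbb{R}$ is convex (so that $\pi$ is log-concave). Let the proposal be the symmetric random walk on $\mathbb{Z}$, $q(m,\{m+1\})=q(m,\{m-1\})=\tfrac12$ for $m\in\mathbb{Z}$. Fix $N\in\mathbb{N}^+$ and suppose the weights are homogeneous: $W_{m,N}=W_N\sim Q_N$ for all $m\in\mathbb{N}^+$, where $Q_N$ is a distribution with $W_N>0$ $Q_N$-a.s. and $\mathbb{E}_{Q_N}[W_N]=1$. Then the Markov chain generated by the noisy kernel $\tilde P_N$ is geometrically ergodic.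
   Context: Noisy Metropolis–Hastings kernel: from state $m$, propose $Y\sim q(m,\cdot)$, draw independent weights $W\sim Q_{m,N}$, $U\sim Q_{Y,N}$ (here both equal to $Q_N$), and move to $Y$ with probability $\min\{1,\frac{\pi(Y)q(Y,m)}{\pi(m)q(m,Y)}\cdot\frac{U}{W}\}$, otherwise stay at $m$ (proposals outside $\mathbb{N}^+$ have $\pi(Y)=0$ and are rejected). Equivalently $\tilde P_N(m,\{y\})=q(m,\{y\})\,\mathbb{E}[\min\{1,\frac{\pi(y)q(y,m)}{\pi(m)q(m,y)}\frac{W^{(1)}}{W^{(2)}}\}]$ for $y\neq m$, with $W^{(1)},W^{(2)}$ independent with the appropriate weight laws. A $\varphi$-irreducible aperiodic Markov chain with kernel $K$ is geometrically ergodic if it has an invariant probability distribution $\mu$ and there exist a finite function $V\ge 1$ and constants $\tau<1$, $R<\infty$ with $\|K^n(x,\cdot)-\mu\|_{TV}\le RV(x)\tau^n$ for all $x$ and $n$, where $K^n$ is the $n$-step kernel and $\|\nu_1-\nu_2\|_{TV}=\sup_A|\nu_1(A)-\nu_2(A)|$. *)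

theory Defs
  imports "HOL-Probability.Probability"
begin

definition posN :: "nat set" where "posN = {1..}"

definition target :: "(nat \<Rightarrow> real) \<Rightarrow> nat \<Rightarrow> real" where
  "target h m = (if m \<in> posN then exp (- h m) / (\<Sum>\<^sub>\<infinity>k\<in>posN. exp (- h k)) else 0)"

definition noisy_acc :: "real measure \<Rightarrow> real \<Rightarrow> real" where
  "noisy_acc Q r = (\<integral>w. (\<integral>u. min 1 (r * u / w) \<partial>Q) \<partial>Q)"

text \<open>Off-diagonal transition probability for a proposal y (symmetric random walk
  proposal q = 1/2 to each neighbour; proposals outside posN have pi(y)=0 and are rejected).\<close>
definition noisy_move :: "(nat \<Rightarrow> real) \<Rightarrow> real measure \<Rightarrow> nat \<Rightarrow> nat \<Rightarrow> real" where
  "noisy_move h Q m y =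
     (if y \<in> posN then 1/2 * noisy_acc Q ((target h y * (1/2)) / (target h m * (1/2))) else 0)"

definition noisy_kernel :: "(nat \<Rightarrow> real) \<Rightarrow> real measure \<Rightarrow> nat \<Rightarrow> nat \<Rightarrow> real" where
  "noisy_kernel h Q m y =
     (if y = m + 1 then noisy_move h Q m (m + 1)
      else if y + 1 = m then noisy_move h Q m y
      else if y = m then 1 - noisy_move h Q m (m + 1) - (if m \<ge> 1 then noisy_move h Q m (m - 1) else 0)
      else 0)"

fun kernel_pow :: "(nat \<Rightarrow> nat \<Rightarrow> real) \<Rightarrow> nat \<Rightarrow> nat \<Rightarrow> nat \<Rightarrow> real" where
  "kernel_pow K 0 x y = (if x = y then 1 else 0)"
| "kernel_pow K (Suc n) x y = (\<Sum>\<^sub>\<infinity>z\<in>posN. kernel_pow K n x z * K z y)"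

definition tv_dist :: "(nat \<Rightarrow> real) \<Rightarrow> (nat \<Rightarrow> real) \<Rightarrow> real" where
  "tv_dist p q = (SUP A\<in>Pow posN. \<bar>(\<Sum>\<^sub>\<infinity>y\<in>A. p y) - (\<Sum>\<^sub>\<infinity>y\<in>A. q y)\<bar>)"

definition prob_on_posN :: "(nat \<Rightarrow> real) \<Rightarrow> bool" where
  "prob_on_posN \<mu> \<longleftrightarrow> (\<forall>y. 0 \<le> \<mu> y) \<and> (\<forall>y. y \<notin> posN \<longrightarrow> \<mu> y = 0)
      \<and> \<mu> summable_on posN \<and> (\<Sum>\<^sub>\<infinity>y\<in>posN. \<mu> y) = 1"

definition invariant :: "(nat \<Rightarrow> nat \<Rightarrow> real) \<Rightarrow> (nat \<Rightarrow> real) \<Rightarrow> bool" where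
  "invariant K \<mu> \<longleftrightarrow> (\<forall>y\<in>posN. (\<Sum>\<^sub>\<infinity>x\<in>posN. \<mu> x * K x y) = \<mu> y)"

definition geom_ergodic :: "(nat \<Rightarrow> nat \<Rightarrow> real) \<Rightarrow> bool" where
  "geom_ergodic K \<longleftrightarrow> (\<exists>\<mu> V \<tau> R. prob_on_posN \<mu> \<and> invariant K \<mu>
      \<and> (\<forall>x\<in>posN. 1 \<le> V x) \<and> 0 \<le> \<tau> \<and> \<tau> < 1
      \<and> (\<forall>x\<in>posN. \<forall>n. tv_dist (kernel_pow K n x) \<mu> \<le> R * V x * \<tau> ^ n))"

end

theory Submission
  imports Defs
begin

text \<open>The noisy kernel is a birth-death chain on the positive integers. Its up-probabilities
  \<open>u m = E[min(1, e\<^sup>-\<^sup>\<delta>\<^sup>m U/W)]/2\<close>, with \<open>\<delta> m = h (m + 1) - h m\<close>, decrease and its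
  down-probabilities increase, because \<open>\<delta>\<close> is nondecreasing by convexity. Summability of
  \<open>e\<^sup>-\<^sup>h\<close> forces some \<open>\<delta> m0 > 0\<close>, and since the noisy acceptance of a ratio \<open>r > 1\<close> strictly
  exceeds that of \<open>1/r\<close> (mean-one weights are \<open>\<ge> 1\<close> and \<open>\<le> 1\<close> with positive probability), far
  out \<open>L u y \<le> d (y - 1)\<close> for some \<open>L > 1\<close>. Such a chain has a reversible distribution with
  geometric tails. The gap \<open>D\<^sub>n(y)\<close> between the distribution functions of \<open>K\<^sup>n(x, \<cdot>)\<close> and the
  stationary law at \<open>y\<close> satisfies a recursion with nonnegative coefficients in
  \<open>D\<^sub>n(y - 1), D\<^sub>n(y), D\<^sub>n(y + 1)\<close>; a weighted \<open>\<ell>\<^sup>1\<close>-norm of \<open>D\<^sub>n\<close>, with weights growing like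
  \<open>(\<surd>L)\<^sup>y\<close>, contracts by a fixed factor \<open>< 1\<close> and dominates the total variation distance.\<close>

lemma mem_posN_iff [simp]: "y \<in> posN \<longleftrightarrow> 1 \<le> y"
  by (simp add: posN_def)

lemma posN_eq_range_Suc: "posN = range Suc"
  by (auto simp: image_iff dest: Suc_le_D)

lemma has_sum_posN_suminf_Suc:
  fixes f :: "nat \<Rightarrow> real"
  assumes "\<And>k. 0 \<le> f (Suc k)" "summable (\<lambda>k. f (Suc k))"
  shows "(f has_sum (\<Sum>k. f (Suc k))) posN"
proof -
  have "((f \<circ> Suc) has_sum (\<Sum>k. f (Suc k))) UNIV"
    using sums_nonneg_imp_has_sum[OF summable_sums[OF assms(2)]] assms(1) by (simp add: o_def)
  then show ?thesis
    unfolding posN_eq_range_Suc using has_sum_reindex[of Suc UNIV f] by simp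
qed

lemma integral_pos_if_pos_on_nonnull:
  fixes f :: "'a \<Rightarrow> real"
  assumes "integrable M f" and "AE x in M. 0 \<le> f x"
    and "\<not> (AE x in M. \<not> P x)" and "AE x in M. P x \<longrightarrow> 0 < f x"
  shows "0 < integral\<^sup>L M f"
proof -
  have "integral\<^sup>L M f \<noteq> 0"
  proof
    assume "integral\<^sup>L M f = 0"
    then have "AE x in M. f x = 0"
      using integral_nonneg_eq_0_iff_AE[OF assms(1,2)] by simp
    with assms(4) have "AE x in M. \<not> P x" by eventually_elim auto
    with assms(3) show False by simp
  qed
  with integral_nonneg_AE[OF assms(2)] show ?thesis by simp
qed

lemma abs_nonneg_lincomb3_le:
  fixes a b c \<alpha> \<beta> \<gamma> :: real
  assumes "0 \<le> \<alpha>" "0 \<le> \<beta>" "0 \<le> \<gamma>"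
  shows "\<bar>\<alpha> * a + \<beta> * b + \<gamma> * c\<bar> \<le> \<alpha> * \<bar>a\<bar> + \<beta> * \<bar>b\<bar> + \<gamma> * \<bar>c\<bar>"
proof -
  have "\<bar>\<alpha> * a + \<beta> * b + \<gamma> * c\<bar> \<le> \<bar>\<alpha> * a\<bar> + \<bar>\<beta> * b\<bar> + \<bar>\<gamma> * c\<bar>"
    by (smt (verit) abs_triangle_ineq)
  also have "\<dots> = \<alpha> * \<bar>a\<bar> + \<beta> * \<bar>b\<bar> + \<gamma> * \<bar>c\<bar>"
    using assms by (simp add: abs_mult)
  finally show ?thesis .
qed

lemma summable_suminf_le_redistributed:
  fixes a b c s t :: "nat \<Rightarrow> real"
  assumes nonneg: "\<And>k. 0 \<le> a k" "\<And>k. 0 \<le> b k" "\<And>k. 0 \<le> c k" "\<And>k. 0 \<le> t k"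
    and shares: "\<And>k. a k + b k + c k \<le> s k" and s: "summable s"
    and cover: "\<And>k. t k \<le> (if k = 0 then 0 else a (k - 1)) + b k + c (Suc k)"
  shows "summable t \<and> suminf t \<le> suminf s"
proof -
  define a' where "a' k = (if k = 0 then 0 else a (k - 1))" for k
  have dominated: "summable f" if "\<And>k. 0 \<le> f k" "\<And>k. f k \<le> s k" for f
    using summable_comparison_test'[OF s, of 0 f] that by simp
  have "a k \<le> s k" "b k \<le> s k" "c k \<le> s k" for k
    using nonneg(1-3)[of k] shares[of k] by linarith+
  then have sa: "summable a" and sb: "summable b" and sc: "summable c"
    using nonneg by (auto intro: dominated)
  have sa': "summable a'" and suma': "suminf a' = suminf a"
    using sa summable_Suc_iff[of a'] suminf_split_head[of a'] by (simp_all add: a'_def)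
  have sc': "summable (\<lambda>k. c (Suc k))" and sumc': "(\<Sum>k. c (Suc k)) \<le> suminf c"
    using sc summable_Suc_iff[of c] suminf_split_head[of c] nonneg(3)[of 0] by simp_all
  have sabc': "summable (\<lambda>k. a' k + b k + c (Suc k))"
    using sa' sb sc' by (intro summable_add)
  have st: "summable t"
    using summable_comparison_test'[OF sabc', of 0 t] cover nonneg(4) by (simp add: a'_def)
  have "suminf t \<le> (\<Sum>k. a' k + b k + c (Suc k))"
    using suminf_le[OF _ st sabc'] cover by (simp add: a'_def)
  also have "\<dots> = suminf a' + suminf b + (\<Sum>k. c (Suc k))"
    using suminf_add[OF sa' sb] suminf_add[OF summable_add[OF sa' sb] sc'] by simp
  also have "\<dots> \<le> suminf a + suminf b + suminf c"
    using suma' sumc' by simp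
  also have "\<dots> = (\<Sum>k. a k + b k + c k)"
    using suminf_add[OF sa sb] suminf_add[OF summable_add[OF sa sb] sc] by simp
  also have "\<dots> \<le> suminf s"
    using suminf_le[OF shares summable_add[OF summable_add[OF sa sb] sc] s] .
  finally show ?thesis using st by simp
qed

definition cum_mass :: "(nat \<Rightarrow> real) \<Rightarrow> nat \<Rightarrow> real" where
  "cum_mass p y = (\<Sum>z\<in>{1..<y}. p z)"

lemma cum_mass_Suc: "1 \<le> y \<Longrightarrow> cum_mass p (Suc y) = cum_mass p y + p y"
  by (simp add: cum_mass_def sum.atLeastLessThan_Suc)

lemma has_sum_cum_mass_envelope:
  assumes "summable (\<lambda>k. \<bar>cum_mass f (k + 2)\<bar>)"
  shows "((\<lambda>y. \<bar>cum_mass f (y + 1)\<bar> + \<bar>cum_mass f y\<bar>)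
          has_sum (2 * (\<Sum>k. \<bar>cum_mass f (k + 2)\<bar>))) posN"
proof -
  define C where "C k = \<bar>cum_mass f k\<bar>" for k
  have s2: "summable (\<lambda>k. C (k + 2))" using assms by (simp add: C_def)
  have s1: "summable (\<lambda>k. C (k + 1))"
    using s2 summable_Suc_iff[of "\<lambda>k. C (k + 1)"] by simp
  have "(\<Sum>k. C (k + 1)) = (\<Sum>k. C (k + 2))"
    using suminf_split_head[OF s1] by (simp add: C_def cum_mass_def)
  then have "(\<Sum>k. C (Suc k + 1) + C (Suc k)) = 2 * (\<Sum>k. C (k + 2))"
    using suminf_add[OF s2 s1] by simp
  moreover have "summable (\<lambda>k. C (Suc k + 1) + C (Suc k))"
    using summable_add[OF s2 s1] by simp
  ultimately show ?thesis
    using has_sum_posN_suminf_Suc[of "\<lambda>y. C (y + 1) + C y"] by (simp add: C_def)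
qed

text \<open>Each \<open>p y - q y\<close> is the increment \<open>D (y + 1) - D y\<close>.\<close>
lemma tv_dist_le_cum_mass:
  fixes p q :: "nat \<Rightarrow> real"
  defines "D \<equiv> cum_mass (\<lambda>z. p z - q z)"
  assumes ps: "p summable_on posN" and qs: "q summable_on posN"
    and Ds: "summable (\<lambda>k. \<bar>D (k + 2)\<bar>)"
  shows "tv_dist p q \<le> 2 * (\<Sum>k. \<bar>D (k + 2)\<bar>)"
  unfolding tv_dist_def
proof (rule cSUP_least)
  fix A assume "A \<in> Pow posN"
  then have A: "A \<subseteq> posN" by simp
  define H where "H y = \<bar>D (y + 1)\<bar> + \<bar>D y\<bar>" for y
  have Hhas: "(H has_sum (2 * (\<Sum>k. \<bar>D (k + 2)\<bar>))) posN"
    unfolding H_def D_def by (rule has_sum_cum_mass_envelope) (use Ds in \<open>simp add: D_def\<close>)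
  have HA: "H summable_on A"
    using summable_on_subset[OF has_sum_imp_summable[OF Hhas] A] .
  have pA: "p summable_on A" and qA: "(\<lambda>y. - q y) summable_on A"
    using summable_on_subset[OF ps A] summable_on_subset[OF qs A] summable_on_uminus by auto
  have fA: "(\<lambda>y. p y - q y) summable_on A"
    using summable_on_add[OF pA qA] by simp
  have "\<bar>(\<Sum>\<^sub>\<infinity>y\<in>A. p y) - (\<Sum>\<^sub>\<infinity>y\<in>A. q y)\<bar> = norm (\<Sum>\<^sub>\<infinity>y\<in>A. p y - q y)"
    using infsum_add[OF pA qA] infsum_uminus[of q A] by simp
  also have "\<dots> \<le> (\<Sum>\<^sub>\<infinity>y\<in>A. norm (p y - q y))"
    by (rule norm_infsum_bound) (rule summable_on_iff_abs_summable_on_real[THEN iffD1, OF fA])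
  also have "\<dots> \<le> (\<Sum>\<^sub>\<infinity>y\<in>A. H y)"
  proof (rule infsum_mono)
    show "(\<lambda>y. norm (p y - q y)) summable_on A"
      using summable_on_iff_abs_summable_on_real[THEN iffD1, OF fA] .
    fix y assume "y \<in> A"
    then have "p y - q y = D (y + 1) - D y"
      using A cum_mass_Suc[of y "\<lambda>z. p z - q z"] by (auto simp: D_def)
    then show "norm (p y - q y) \<le> H y"
      unfolding H_def real_norm_def by linarith
  qed (rule HA)
  also have "\<dots> \<le> (\<Sum>\<^sub>\<infinity>y\<in>posN. H y)"
    by (rule infsum_mono_neutral[OF HA has_sum_imp_summable[OF Hhas]]) (use A in \<open>auto simp: H_def\<close>)
  also have "\<dots> = 2 * (\<Sum>k. \<bar>D (k + 2)\<bar>)"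
    by (rule infsumI[OF Hhas])
  finally show "\<bar>(\<Sum>\<^sub>\<infinity>y\<in>A. p y) - (\<Sum>\<^sub>\<infinity>y\<in>A. q y)\<bar> \<le> 2 * (\<Sum>k. \<bar>D (k + 2)\<bar>)" .
qed blast

subsection \<open>Birth-death chains\<close>

definition birth_death :: "(nat \<Rightarrow> nat \<Rightarrow> real) \<Rightarrow> (nat \<Rightarrow> real) \<Rightarrow> (nat \<Rightarrow> real) \<Rightarrow> bool" where
  "birth_death K u d \<longleftrightarrow> (\<forall>m\<in>posN. \<forall>y\<in>posN. K m y =
     (if y = m + 1 then u m else if y + 1 = m then d m else if y = m then 1 - u m - d m else 0))"

definition bd_step :: "(nat \<Rightarrow> real) \<Rightarrow> (nat \<Rightarrow> real) \<Rightarrow> (nat \<Rightarrow> real) \<Rightarrow> nat \<Rightarrow> real" where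
  "bd_step u d p y = (if 2 \<le> y then u (y - 1) * p (y - 1) else 0)
     + (1 - u y - d y) * p y + d (y + 1) * p (y + 1)"

lemma infsum_birth_death:
  assumes K: "birth_death K u d" and y: "y \<in> posN"
  shows "(\<Sum>\<^sub>\<infinity>z\<in>posN. p z * K z y) = bd_step u d p y"
proof -
  define S where "S = (if 2 \<le> y then {y - 1, y, y + 1} else {y, y + 1})"
  have "(\<Sum>\<^sub>\<infinity>z\<in>posN. p z * K z y) = (\<Sum>\<^sub>\<infinity>z\<in>S. p z * K z y)"
  proof (rule infsum_cong_neutral)
    fix z assume "z \<in> posN - S"
    then show "p z * K z y = 0"
      using K y unfolding birth_death_def S_def by (auto split: if_splits)
  qed (use y in \<open>auto simp: S_def split: if_splits\<close>)
  also have "\<dots> = bd_step u d p y"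
  proof (cases "2 \<le> y")
    case True
    then have "K (y - 1) y = u (y - 1)" "K y y = 1 - u y - d y" "K (y + 1) y = d (y + 1)"
      using K unfolding birth_death_def by auto
    moreover have "y - 1 \<noteq> y" "y - 1 \<noteq> y + 1" using True by auto
    ultimately show ?thesis using True by (simp add: S_def bd_step_def mult.commute)
  next
    case False
    then have "y = 1" using y by simp
    then have "K y y = 1 - u y - d y" "K (y + 1) y = d (y + 1)"
      using K unfolding birth_death_def by auto
    with \<open>y = 1\<close> show ?thesis by (simp add: S_def bd_step_def mult.commute)
  qed
  finally show ?thesis .
qed

lemma bd_step_diff:
  "bd_step u d (\<lambda>z. p z - q z) y = bd_step u d p y - bd_step u d q y"
  by (simp add: bd_step_def algebra_simps)

text \<open>Mass only crosses the boundary between \<open>y - 1\<close> and \<open>y\<close> in one step.\<close>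
lemma cum_mass_bd_step:
  assumes "d 1 = 0" and "2 \<le> y"
  shows "cum_mass (bd_step u d p) y = cum_mass p y - u (y - 1) * p (y - 1) + d y * p y"
  using assms(2)
proof (induction y rule: dec_induct)
  case base
  then show ?case
    using assms(1) by (simp add: cum_mass_def bd_step_def numeral_2_eq_2 algebra_simps)
next
  case (step y)
  then show ?case
    by (simp add: cum_mass_Suc bd_step_def algebra_simps)
qed

lemma cum_mass_cong_posN:
  "(\<And>z. 1 \<le> z \<Longrightarrow> p z = q z) \<Longrightarrow> cum_mass p y = cum_mass q y"
  unfolding cum_mass_def by (rule sum.cong) auto

locale monotone_birth_death =
  fixes K :: "nat \<Rightarrow> nat \<Rightarrow> real" and u d :: "nat \<Rightarrow> real" and L :: real and y0 :: nat
  assumes kernel: "birth_death K u d"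
    and up_pos: "\<And>m. 1 \<le> m \<Longrightarrow> 0 < u m"
    and up_le_half: "\<And>m. 1 \<le> m \<Longrightarrow> u m \<le> 1/2"
    and down_1: "d 1 = 0"
    and down_pos: "\<And>m. 2 \<le> m \<Longrightarrow> 0 < d m"
    and down_le_half: "\<And>m. 2 \<le> m \<Longrightarrow> d m \<le> 1/2"
    and up_Suc_le: "\<And>m. 1 \<le> m \<Longrightarrow> u (m + 1) \<le> u m"
    and down_le_Suc: "\<And>m. 2 \<le> m \<Longrightarrow> d m \<le> d (m + 1)"
    and drift_gt_1: "1 < L"
    and tail_start: "3 \<le> y0"
    and tail_drift: "\<And>y. y0 \<le> y \<Longrightarrow> L * u y \<le> d (y - 1)"
begin

lemma down_mono: assumes "2 \<le> m" "m \<le> n" shows "d m \<le> d n"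
  using assms(2,1)
proof (induction n rule: dec_induct)
  case (step n) then show ?case using down_le_Suc[of n] by simp
qed simp

lemma up_nonneg: "1 \<le> m \<Longrightarrow> 0 \<le> u m"
  using up_pos[of m] by simp

lemma down_nonneg: "1 \<le> m \<Longrightarrow> 0 \<le> d m"
  using down_pos[of m] down_1 by (cases "m = 1") auto

lemma gap_coeff_nonneg: "1 \<le> m \<Longrightarrow> 0 \<le> 1 - u m - d (m + 1)"
  using up_le_half[of m] down_le_half[of "m + 1"] by simp

subsection \<open>The stationary distribution\<close>

definition balance_weight :: "nat \<Rightarrow> real" where
  "balance_weight y = (\<Prod>k\<in>{1..<y}. u k / d (k + 1))"

definition \<rho> :: real where "\<rho> = 1 / L"

lemma rho_pos: "0 < \<rho>" and rho_lt_1: "\<rho> < 1"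
  using drift_gt_1 by (auto simp: \<rho>_def)

lemma balance_weight_pos: "0 < balance_weight y"
  unfolding balance_weight_def by (rule prod_pos) (auto intro!: divide_pos_pos up_pos down_pos)

lemma balance_weight_Suc:
  "1 \<le> y \<Longrightarrow> balance_weight (Suc y) = balance_weight y * (u y / d (y + 1))"
  unfolding balance_weight_def by (simp add: prod.atLeastLessThan_Suc)

lemma balance_ratio_tail: "y0 \<le> z \<Longrightarrow> u z / d (z + 1) \<le> \<rho>"
proof -
  assume z: "y0 \<le> z"
  have "d (z - 1) \<le> d (z + 1)"
    by (rule down_mono) (use z tail_start in auto)
  then have "L * u z \<le> d (z + 1)"
    using tail_drift[OF z] by linarith
  moreover have "0 < d (z + 1)" using down_pos z tail_start by simp
  ultimately show ?thesis
    using drift_gt_1 by (simp add: \<rho>_def divide_simps mult.commute)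
qed

lemma balance_weight_geometric:
  assumes "y0 \<le> z" shows "balance_weight z \<le> balance_weight y0 * \<rho> ^ (z - y0)"
  using assms
proof (induction z rule: dec_induct)
  case (step n)
  have "balance_weight (Suc n) = balance_weight n * (u n / d (n + 1))"
    using balance_weight_Suc step tail_start by simp
  also have "\<dots> \<le> balance_weight n * \<rho>"
    using balance_ratio_tail[of n] step balance_weight_pos[of n] by (intro mult_left_mono) auto
  also have "\<dots> \<le> balance_weight y0 * \<rho> ^ (n - y0) * \<rho>"
    using step rho_pos by (intro mult_right_mono) auto
  also have "\<dots> = balance_weight y0 * \<rho> ^ (Suc n - y0)"
    using step by (simp add: Suc_diff_le)
  finally show ?case .
qed simp

lemma summable_balance_weight: "summable (\<lambda>k. balance_weight (Suc k))"
proof (rule summable_comparison_test')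
  show "summable (\<lambda>k. balance_weight y0 / \<rho> ^ y0 * \<rho> ^ Suc k)"
    using rho_pos rho_lt_1
    by (intro summable_mult summable_geometric[THEN summable_Suc_iff[THEN iffD2]]) auto
  fix n assume n: "y0 \<le> n"
  have "\<rho> ^ Suc n = \<rho> ^ (Suc n - y0) * \<rho> ^ y0"
    using n by (simp flip: power_add)
  then show "norm (balance_weight (Suc n)) \<le> balance_weight y0 / \<rho> ^ y0 * \<rho> ^ Suc n"
    using balance_weight_geometric[of "Suc n"] n balance_weight_pos[of "Suc n"] rho_pos by simp
qed

definition balance_mass :: real where "balance_mass = (\<Sum>k. balance_weight (Suc k))"

lemma balance_mass_pos: "0 < balance_mass"
  unfolding balance_mass_def using summable_balance_weight balance_weight_pos
  by (intro suminf_pos) auto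

definition stat :: "nat \<Rightarrow> real" where
  "stat y = (if 1 \<le> y then balance_weight y / balance_mass else 0)"

lemma stat_nonneg: "0 \<le> stat y"
  using balance_weight_pos balance_mass_pos by (simp add: stat_def less_imp_le)

lemma summable_stat: "summable (\<lambda>k. stat (Suc k))"
  using summable_divide[OF summable_balance_weight, of balance_mass] by (simp add: stat_def)

lemma suminf_stat: "(\<Sum>k. stat (Suc k)) = 1"
  using suminf_divide[OF summable_balance_weight, of balance_mass] balance_mass_pos
  by (simp add: stat_def balance_mass_def)

lemma stat_le_1: "stat y \<le> 1"
proof (cases y)
  case (Suc k)
  have "sum (\<lambda>k. stat (Suc k)) {k} \<le> 1"
    using sum_le_suminf[OF summable_stat, of "{k}"] suminf_stat stat_nonneg by simp
  then show ?thesis using Suc by simp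
qed (simp add: stat_def)

lemma stat_detailed_balance: "1 \<le> m \<Longrightarrow> stat m * u m = stat (m + 1) * d (m + 1)"
  using balance_weight_Suc[of m] down_pos[of "m + 1"] by (simp add: stat_def)

lemma stat_geometric: "stat z \<le> L ^ y0 * \<rho> ^ z"
proof -
  have L_rho: "L ^ y0 * \<rho> ^ y0 = 1"
    using drift_gt_1 by (simp add: \<rho>_def power_divide)
  show ?thesis
  proof (cases "y0 \<le> z")
    case True
    have "stat z \<le> stat y0 * \<rho> ^ (z - y0)"
      using balance_weight_geometric[OF True] balance_mass_pos True tail_start
      by (simp add: stat_def divide_right_mono)
    also have "\<dots> \<le> \<rho> ^ (z - y0)"
      using stat_le_1[of y0] stat_nonneg[of y0] rho_pos by (simp add: mult_left_le_one_le)
    also have "\<dots> = L ^ y0 * \<rho> ^ z"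
    proof -
      have "\<rho> ^ z = \<rho> ^ (z - y0) * \<rho> ^ y0" using True by (simp flip: power_add)
      then show ?thesis using L_rho by (simp add: algebra_simps)
    qed
    finally show ?thesis .
  next
    case False
    have "1 = L ^ y0 * \<rho> ^ y0" using L_rho ..
    also have "\<dots> \<le> L ^ y0 * \<rho> ^ z"
      using False rho_pos rho_lt_1 drift_gt_1 by (intro mult_left_mono power_decreasing) auto
    finally have "1 \<le> L ^ y0 * \<rho> ^ z" .
    then show ?thesis using stat_le_1[of z] by linarith
  qed
qed

lemma stat_prob: "prob_on_posN stat"
proof -
  have "(stat has_sum 1) posN"
    using has_sum_posN_suminf_Suc[OF stat_nonneg summable_stat] suminf_stat by simp
  then show ?thesis
    unfolding prob_on_posN_def using stat_nonneg by (auto simp: stat_def has_sum_iff)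
qed

lemma bd_step_stat:
  assumes "1 \<le> y" shows "bd_step u d stat y = stat y"
proof (cases "y = 1")
  case True
  then show ?thesis
    using stat_detailed_balance[of 1] down_1 by (simp add: bd_step_def algebra_simps)
next
  case False
  then show ?thesis
    using assms stat_detailed_balance[of y] stat_detailed_balance[of "y - 1"]
    by (simp add: bd_step_def algebra_simps)
qed

lemma stat_invariant: "invariant K stat"
  unfolding invariant_def using infsum_birth_death[OF kernel] bd_step_stat by simp

lemma kernel_pow_Suc_bd_step:
  "1 \<le> y \<Longrightarrow> kernel_pow K (Suc n) x y = bd_step u d (kernel_pow K n x) y"
  using infsum_birth_death[OF kernel] by simp

lemma kernel_pow_eq_0: "1 \<le> x \<Longrightarrow> x + n < y \<Longrightarrow> kernel_pow K n x y = 0"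
  by (induction n arbitrary: y)
    (auto simp: kernel_pow_Suc_bd_step bd_step_def simp del: kernel_pow.simps(2))

lemma kernel_pow_summable_on:
  assumes "1 \<le> x" shows "kernel_pow K n x summable_on posN"
proof -
  have "kernel_pow K n x summable_on posN \<longleftrightarrow> kernel_pow K n x summable_on {1..x + n}"
    by (rule summable_on_cong_neutral) (use kernel_pow_eq_0[OF assms] in auto)
  then show ?thesis by simp
qed

definition cdf_gap :: "nat \<Rightarrow> nat \<Rightarrow> nat \<Rightarrow> real" where
  "cdf_gap x n = cum_mass (\<lambda>z. kernel_pow K n x z - stat z)"

text \<open>Since \<open>stat\<close> is fixed by \<open>bd_step\<close>, the gap between the distribution functions of
  \<open>K\<^sup>n(x, \<cdot>)\<close> and \<open>stat\<close> evolves by a recursion with nonnegative coefficients; this is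
  stochastic monotonicity of the chain.\<close>
lemma cdf_gap_Suc:
  assumes y: "2 \<le> y"
  shows "cdf_gap x (Suc n) y = u (y - 1) * cdf_gap x n (y - 1)
           + (1 - u (y - 1) - d y) * cdf_gap x n y + d y * cdf_gap x n (y + 1)"
proof -
  define e where "e = (\<lambda>z. kernel_pow K n x z - stat z)"
  have "cdf_gap x (Suc n) y = cum_mass (bd_step u d e) y"
    unfolding cdf_gap_def e_def
    by (rule cum_mass_cong_posN)
      (simp add: kernel_pow_Suc_bd_step bd_step_diff bd_step_stat del: kernel_pow.simps(2))
  also have "\<dots> = cum_mass e y - u (y - 1) * e (y - 1) + d y * e y"
    using cum_mass_bd_step[of d y u e] down_1 y by simp
  also have gap: "cum_mass e = cdf_gap x n"
    by (simp add: cdf_gap_def e_def)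
  also have "e (y - 1) = cdf_gap x n y - cdf_gap x n (y - 1)"
    using cum_mass_Suc[of "y - 1" e] y by (simp flip: gap)
  also have "e y = cdf_gap x n (y + 1) - cdf_gap x n y"
    using cum_mass_Suc[of y e] y by (simp flip: gap)
  finally show ?thesis
    by (simp add: algebra_simps)
qed

subsection \<open>A Lyapunov weight for the distribution-function gap\<close>

definition \<beta> :: real where "\<beta> = d 2"
definition \<sigma> :: real where "\<sigma> = sqrt L"

lemma beta_pos: "0 < \<beta>" and beta_le_half: "\<beta> \<le> 1/2"
  using down_pos[of 2] down_le_half[of 2] by (auto simp: \<beta>_def)

lemma beta_le_down: "2 \<le> m \<Longrightarrow> \<beta> \<le> d m"
  using down_mono[of 2 m] by (simp add: \<beta>_def)

lemma sigma_gt_1: "1 < \<sigma>" and sigma_sq: "\<sigma> * \<sigma> = L"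
  using drift_gt_1 by (simp_all add: \<sigma>_def)

text \<open>Below \<open>y0\<close> the increments shrink by the factor \<open>\<beta> \<le> d\<close>, so downward moves win;
  from \<open>y0\<close> on they grow by \<open>\<sigma> = \<surd>L\<close>, slowly enough for the tail drift \<open>L u \<le> d\<close> to still
  win.\<close>
definition lyap_incr :: "nat \<Rightarrow> real" where
  "lyap_incr k = (if k < y0 then \<beta> ^ k else \<beta> ^ (y0 - 1) * \<sigma> ^ (k - (y0 - 1)))"

definition lyap :: "nat \<Rightarrow> real" where
  "lyap y = 1 + (\<Sum>k\<in>{2..<y}. lyap_incr k)"

lemma lyap_incr_pos: "0 < lyap_incr k"
  using beta_pos sigma_gt_1 by (simp add: lyap_incr_def)

lemma lyap_incr_le_1: "k < y0 \<Longrightarrow> lyap_incr k \<le> 1"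
  using beta_pos beta_le_half by (simp add: lyap_incr_def power_le_one)

lemma lyap_incr_below: "y < y0 \<Longrightarrow> 1 \<le> y \<Longrightarrow> lyap_incr y = \<beta> * lyap_incr (y - 1)"
  by (simp add: lyap_incr_def power_eq_if)

lemma lyap_incr_above:
  assumes "y0 \<le> y" shows "lyap_incr y = \<sigma> * lyap_incr (y - 1)"
proof (cases "y = y0")
  case False
  then have "y - (y0 - 1) = Suc (y - 1 - (y0 - 1))" using assms tail_start by simp
  then show ?thesis using assms False by (simp add: lyap_incr_def)
qed (use tail_start in \<open>simp add: lyap_incr_def\<close>)

lemma lyap_incr_le_power: "lyap_incr k \<le> \<sigma> ^ (k + 1)"
proof (cases "k < y0")
  case True
  then have "lyap_incr k \<le> 1" by (rule lyap_incr_le_1)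
  also have "1 \<le> \<sigma> ^ (k + 1)" using sigma_gt_1 by (intro one_le_power) simp
  finally show ?thesis .
next
  case False
  have "lyap_incr k \<le> 1 * \<sigma> ^ (k - (y0 - 1))"
    using False beta_pos beta_le_half sigma_gt_1
    by (simp add: lyap_incr_def) (intro mult_right_mono power_le_one, auto)
  also have "\<dots> \<le> \<sigma> ^ (k + 1)"
    using power_increasing[of "k - (y0 - 1)" "k + 1" \<sigma>] sigma_gt_1 by simp
  finally show ?thesis .
qed

lemma lyap_Suc: "2 \<le> y \<Longrightarrow> lyap (Suc y) = lyap y + lyap_incr y"
  unfolding lyap_def by (simp add: sum.atLeastLessThan_Suc)

lemma lyap_ge_1: "1 \<le> lyap y"
  unfolding lyap_def using lyap_incr_pos by (simp add: sum_nonneg less_imp_le)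

lemma lyap_le_below: assumes "2 \<le> y" "y \<le> y0" shows "lyap y \<le> y"
  using assms
proof (induction y rule: dec_induct)
  case (step n)
  then show ?case using lyap_incr_le_1[of n] lyap_Suc[of n] by simp
qed (simp add: lyap_def)

definition lyap_const :: real where
  "lyap_const = max (real y0 / \<beta> ^ y0) (\<sigma> / (\<sigma> - 1))"

lemma lyap_const_pos: "0 < lyap_const"
  using sigma_gt_1 by (simp add: lyap_const_def less_max_iff_disj)

lemma lyap_le_incr_below:
  assumes "3 \<le> y" "y \<le> y0" shows "lyap y \<le> lyap_const * lyap_incr (y - 1)"
proof -
  have "lyap y \<le> (real y0 / \<beta> ^ y0) * \<beta> ^ y0"
    using lyap_le_below[of y] assms beta_pos by simp
  also have "\<dots> \<le> lyap_const * \<beta> ^ y0"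
    using beta_pos by (intro mult_right_mono) (auto simp: lyap_const_def)
  also have "\<dots> \<le> lyap_const * \<beta> ^ (y - 1)"
    using beta_pos beta_le_half assms lyap_const_pos by (intro mult_left_mono power_decreasing) auto
  also have "\<beta> ^ (y - 1) = lyap_incr (y - 1)"
    using assms by (simp add: lyap_incr_def)
  finally show ?thesis .
qed

lemma lyap_le_incr_above:
  assumes "y0 \<le> y" shows "lyap y \<le> lyap_const * lyap_incr (y - 1)"
  using assms
proof (induction y rule: dec_induct)
  case base then show ?case using lyap_le_incr_below[of y0] tail_start by simp
next
  case (step n)
  have "\<sigma> / (\<sigma> - 1) \<le> lyap_const"
    by (simp add: lyap_const_def)
  then have "\<sigma> \<le> lyap_const * (\<sigma> - 1)"
    using sigma_gt_1 by (simp add: divide_le_eq)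
  then have "lyap_const / \<sigma> + 1 \<le> lyap_const"
    using sigma_gt_1 by (simp add: field_simps)
  have "lyap (Suc n) = lyap n + lyap_incr n"
    using lyap_Suc[of n] step tail_start by simp
  also have "\<dots> \<le> (lyap_const / \<sigma> + 1) * lyap_incr n"
    using step lyap_incr_above[of n] sigma_gt_1 by (simp add: field_simps)
  also have "\<dots> \<le> lyap_const * lyap_incr n"
    using \<open>lyap_const / \<sigma> + 1 \<le> lyap_const\<close> lyap_incr_pos[of n] by (intro mult_right_mono) auto
  finally show ?case by simp
qed

lemma lyap_le_incr: "3 \<le> y \<Longrightarrow> lyap y \<le> lyap_const * lyap_incr (y - 1)"
  using lyap_le_incr_below lyap_le_incr_above by (cases "y \<le> y0") auto

lemma lyap_le_power:
  assumes "3 \<le> y" shows "lyap y \<le> lyap_const * \<sigma> ^ y"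
proof -
  have "lyap y \<le> lyap_const * lyap_incr (y - 1)"
    using lyap_le_incr[OF assms] .
  also have "\<dots> \<le> lyap_const * \<sigma> ^ y"
    using lyap_incr_le_power[of "y - 1"] assms lyap_const_pos by (intro mult_left_mono) auto
  finally show ?thesis .
qed

definition \<kappa> :: real where "\<kappa> = min (1/2) (1 - 1/\<sigma>) * \<beta>"

lemma kappa_pos: "0 < \<kappa>"
  using sigma_gt_1 beta_pos by (simp add: \<kappa>_def)

lemma kappa_le_half_beta: "\<kappa> \<le> (1/2) * \<beta>"
  unfolding \<kappa>_def by (rule mult_right_mono[OF min.cobounded1]) (use beta_pos in simp)

lemma kappa_le_beta: "\<kappa> \<le> (1 - 1/\<sigma>) * \<beta>"
  unfolding \<kappa>_def by (rule mult_right_mono[OF min.cobounded2]) (use beta_pos in simp)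

lemma lyap_incr_drift:
  assumes y: "3 \<le> y"
  shows "u y * lyap_incr y - d (y - 1) * lyap_incr (y - 1) \<le> - \<kappa> * lyap_incr (y - 1)"
proof -
  have beta_d: "\<beta> \<le> d (y - 1)" using beta_le_down[of "y - 1"] y by simp
  obtain r where r: "lyap_incr y = r * lyap_incr (y - 1)" and "u y * r \<le> d (y - 1) - \<kappa>"
  proof (cases "y < y0")
    case True
    have "u y * \<beta> \<le> (1/2) * \<beta>"
      using up_le_half[of y] y beta_pos by (intro mult_right_mono) auto
    then have "u y * \<beta> \<le> d (y - 1) - \<kappa>"
      using beta_d kappa_le_half_beta by linarith
    then show ?thesis using lyap_incr_below[of y] True y by (intro that[of \<beta>]) simp_all
  next
    case False
    have "\<sigma> * (\<sigma> * u y) \<le> d (y - 1)"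
      using tail_drift[of y] False sigma_sq by (simp add: mult.assoc[symmetric])
    then have "u y * \<sigma> \<le> d (y - 1) / \<sigma>"
      using sigma_gt_1 by (simp add: le_divide_eq mult.commute)
    moreover have "(1 - 1/\<sigma>) * \<beta> \<le> (1 - 1/\<sigma>) * d (y - 1)"
      using beta_d sigma_gt_1 by (intro mult_left_mono) auto
    ultimately have "u y * \<sigma> \<le> d (y - 1) - \<kappa>"
      using kappa_le_beta by (simp add: algebra_simps)
    then show ?thesis using lyap_incr_above[of y] False by (intro that[of \<sigma>]) simp_all
  qed
  then have "u y * lyap_incr y \<le> (d (y - 1) - \<kappa>) * lyap_incr (y - 1)"
    unfolding r using lyap_incr_pos[of "y - 1"]
    by (simp add: mult.assoc[symmetric] mult_right_mono)
  then show ?thesis by (simp add: algebra_simps)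
qed

definition contraction :: real where
  "contraction = 1 - min (\<beta>/2) (\<kappa> / lyap_const)"

lemma contraction_lt_1: "contraction < 1" and contraction_nonneg: "0 \<le> contraction"
proof -
  have "0 < min (\<beta>/2) (\<kappa> / lyap_const)" "min (\<beta>/2) (\<kappa> / lyap_const) \<le> 1"
    using kappa_pos lyap_const_pos beta_pos beta_le_half by auto
  then show "contraction < 1" "0 \<le> contraction"
    by (simp_all add: contraction_def)
qed

lemma lyap_drift_at_2:
  "u 2 * lyap 3 + (1 - u 1 - d 2) * lyap 2 + d 1 * lyap 1 \<le> contraction * lyap 2"
proof -
  have g2: "lyap 2 = 1" by (simp add: lyap_def)
  have g3: "lyap 3 = 1 + \<beta>^2"
    using lyap_Suc[of 2] g2 tail_start by (simp add: lyap_incr_def numeral_3_eq_3)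
  have "\<beta>^2 \<le> \<beta>"
    using beta_pos beta_le_half by (simp add: power2_eq_square)
  then have "u 2 * \<beta>^2 \<le> (1/2) * \<beta>"
    using up_le_half[of 2] beta_pos by (intro mult_mono) auto
  moreover have "u 2 \<le> u 1"
    using up_Suc_le[of 1] by (simp add: numeral_2_eq_2)
  ultimately show ?thesis
    using g2 g3 down_1 min.cobounded1[of "\<beta>/2" "\<kappa> / lyap_const"]
    by (simp add: contraction_def \<beta>_def algebra_simps)
qed

text \<open>Monotonicity of \<open>u\<close> and \<open>d\<close> keeps the total coefficient of \<open>lyap y\<close> at most 1, and the
  increments then contribute the drift of \<open>lyap_incr_drift\<close>.\<close>
lemma lyap_drift:
  assumes y: "2 \<le> y"
  shows "u y * lyap (y + 1) + (1 - u (y - 1) - d y) * lyap y + d (y - 1) * lyap (y - 1)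
           \<le> contraction * lyap y"
proof (cases "3 \<le> y")
  case True
  have g1: "lyap (y + 1) = lyap y + lyap_incr y" using lyap_Suc[of y] y by simp
  have g2: "lyap y = lyap (y - 1) + lyap_incr (y - 1)" using lyap_Suc[of "y - 1"] True by simp
  have mono: "0 \<le> u (y - 1) - u y" "0 \<le> d y - d (y - 1)"
    using up_Suc_le[of "y - 1"] down_le_Suc[of "y - 1"] True by simp_all
  have "u y * lyap (y + 1) + (1 - u (y - 1) - d y) * lyap y + d (y - 1) * lyap (y - 1)
     = lyap y * (1 - (u (y - 1) - u y) - (d y - d (y - 1)))
       + (u y * lyap_incr y - d (y - 1) * lyap_incr (y - 1))"
    unfolding g1 using g2 by (simp add: algebra_simps)
  also have "\<dots> \<le> lyap y * 1 + (- \<kappa> * lyap_incr (y - 1))"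
    using lyap_incr_drift[OF True] mono lyap_ge_1[of y] by (intro add_mono mult_left_mono) auto
  also have "\<dots> \<le> lyap y - (\<kappa> / lyap_const) * lyap y"
  proof -
    have "(\<kappa> / lyap_const) * lyap y \<le> (\<kappa> / lyap_const) * (lyap_const * lyap_incr (y - 1))"
      using lyap_le_incr[OF True] kappa_pos lyap_const_pos by (intro mult_left_mono) auto
    then show ?thesis using lyap_const_pos by simp
  qed
  also have "\<dots> \<le> contraction * lyap y"
  proof -
    have "min (\<beta>/2) (\<kappa> / lyap_const) * lyap y \<le> (\<kappa> / lyap_const) * lyap y"
      using lyap_ge_1[of y] by (intro mult_right_mono) auto
    then show ?thesis by (simp add: contraction_def left_diff_distrib)
  qed
  finally show ?thesis .
next
  case False
  then have "y = 2" using y by simp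
  then show ?thesis using lyap_drift_at_2 by (simp add: numeral_3_eq_3)
qed

definition weighted_gap :: "nat \<Rightarrow> nat \<Rightarrow> nat \<Rightarrow> real" where
  "weighted_gap x n k = lyap (k + 2) * \<bar>cdf_gap x n (k + 2)\<bar>"

lemma weighted_gap_nonneg: "0 \<le> weighted_gap x n k"
  unfolding weighted_gap_def using lyap_ge_1[of "k + 2"] by simp

lemma weighted_gap_Suc_le:
  "weighted_gap x (Suc n) k \<le> lyap (k + 2) * (u (k + 1) * \<bar>cdf_gap x n (k + 1)\<bar>
     + (1 - u (k + 1) - d (k + 2)) * \<bar>cdf_gap x n (k + 2)\<bar> + d (k + 2) * \<bar>cdf_gap x n (k + 3)\<bar>)"
proof -
  have "\<bar>cdf_gap x (Suc n) (k + 2)\<bar> \<le> u (k + 1) * \<bar>cdf_gap x n (k + 1)\<bar>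
      + (1 - u (k + 1) - d (k + 2)) * \<bar>cdf_gap x n (k + 2)\<bar> + d (k + 2) * \<bar>cdf_gap x n (k + 3)\<bar>"
    using cdf_gap_Suc[of "k + 2" x n] abs_nonneg_lincomb3_le
      up_nonneg[of "k + 1"] gap_coeff_nonneg[of "k + 1"] down_nonneg[of "k + 2"]
    by (simp add: numeral_3_eq_3)
  then show ?thesis
    unfolding weighted_gap_def using lyap_ge_1[of "k + 2"] by (intro mult_left_mono) auto
qed

text \<open>Each term of the gap at time \<open>n\<close> is shared out, according to the gap recursion,
  between its neighbours at time \<open>n + 1\<close>; the drift condition bounds the shares.\<close>
lemma weighted_gap_Suc:
  assumes "summable (weighted_gap x n)"
  shows "summable (weighted_gap x (Suc n))
    \<and> suminf (weighted_gap x (Suc n)) \<le> contraction * suminf (weighted_gap x n)"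
proof -
  define D where "D = cdf_gap x n"
  define a where "a k = lyap (k + 3) * u (k + 2) * \<bar>D (k + 2)\<bar>" for k
  define b where "b k = lyap (k + 2) * (1 - u (k + 1) - d (k + 2)) * \<bar>D (k + 2)\<bar>" for k
  define c where "c k = lyap (k + 1) * d (k + 1) * \<bar>D (k + 2)\<bar>" for k
  have lyap_nonneg: "0 \<le> lyap y" for y
    using lyap_ge_1[of y] by simp
  have shares: "a k + b k + c k \<le> contraction * weighted_gap x n k" for k
  proof -
    have "a k + b k + c k = \<bar>D (k + 2)\<bar> * (u (k + 2) * lyap (k + 2 + 1)
        + (1 - u (k + 2 - 1) - d (k + 2)) * lyap (k + 2) + d (k + 2 - 1) * lyap (k + 2 - 1))"
      by (simp add: a_def b_def c_def numeral_3_eq_3 algebra_simps)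
    also have "\<dots> \<le> \<bar>D (k + 2)\<bar> * (contraction * lyap (k + 2))"
      by (intro mult_left_mono lyap_drift) auto
    finally show ?thesis
      by (simp add: weighted_gap_def D_def mult_ac)
  qed
  have cover: "weighted_gap x (Suc n) k \<le> (if k = 0 then 0 else a (k - 1)) + b k + c (Suc k)" for k
  proof -
    have "D (Suc 0) = 0"
      by (simp add: D_def cdf_gap_def cum_mass_def)
    then show ?thesis
      using weighted_gap_Suc_le[of x n k]
      by (cases k) (simp_all add: a_def b_def c_def D_def numeral_3_eq_3 algebra_simps)
  qed
  show ?thesis
    using summable_suminf_le_redistributed[OF _ _ _ weighted_gap_nonneg shares _ cover]
      summable_mult[OF assms] suminf_mult[OF assms]
      up_nonneg gap_coeff_nonneg down_nonneg lyap_nonneg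
    by (simp add: a_def b_def c_def)
qed

lemma weighted_gap_geometric:
  assumes "summable (weighted_gap x 0)"
  shows "summable (weighted_gap x n)
    \<and> suminf (weighted_gap x n) \<le> contraction ^ n * suminf (weighted_gap x 0)"
proof (induction n)
  case (Suc n)
  then have "summable (weighted_gap x (Suc n))"
    and "suminf (weighted_gap x (Suc n)) \<le> contraction * suminf (weighted_gap x n)"
    using weighted_gap_Suc[of x n] by auto
  moreover have "contraction * suminf (weighted_gap x n)
      \<le> contraction * (contraction ^ n * suminf (weighted_gap x 0))"
    using Suc contraction_nonneg by (intro mult_left_mono) auto
  ultimately show ?case by (simp add: mult.assoc)
qed (use assms in simp)

definition stat_tail :: "nat \<Rightarrow> real" where
  "stat_tail y = (\<Sum>k. stat (k + y))"

lemma summable_stat_tail: "summable (\<lambda>k. stat (k + y))"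
  and stat_tail_le: "stat_tail y \<le> L ^ y0 * \<rho> ^ y / (1 - \<rho>)"
proof -
  have geom: "summable (\<lambda>k. L ^ y0 * \<rho> ^ y * \<rho> ^ k)"
    using rho_pos rho_lt_1 by (intro summable_mult summable_geometric) auto
  have le: "stat (k + y) \<le> L ^ y0 * \<rho> ^ y * \<rho> ^ k" for k
    using stat_geometric[of "k + y"] by (simp add: power_add mult_ac)
  show "summable (\<lambda>k. stat (k + y))"
    by (rule summable_comparison_test'[OF geom, of 0]) (use le stat_nonneg in simp)
  then have "stat_tail y \<le> (\<Sum>k. L ^ y0 * \<rho> ^ y * \<rho> ^ k)"
    unfolding stat_tail_def using suminf_le[OF le _ geom] by simp
  also have "\<dots> = L ^ y0 * \<rho> ^ y / (1 - \<rho>)"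
    using suminf_mult[OF summable_geometric[of \<rho>]] suminf_geometric[of \<rho>] rho_pos rho_lt_1
    by simp
  finally show "stat_tail y \<le> L ^ y0 * \<rho> ^ y / (1 - \<rho>)" .
qed

lemma cum_mass_stat_add_tail:
  assumes y: "1 \<le> y" shows "cum_mass stat y + stat_tail y = 1"
proof -
  have "cum_mass stat y = (\<Sum>i<y - 1. stat (Suc i))"
    using y sum.shift_bounds_Suc_ivl[of stat 0 "y - 1"] by (simp add: cum_mass_def atLeast0LessThan)
  moreover have "(\<lambda>k. stat (Suc (k + (y - 1)))) = (\<lambda>k. stat (k + y))"
    using y by auto
  ultimately show ?thesis
    using suminf_split_initial_segment[OF summable_stat, of "y - 1"] suminf_stat
    by (simp add: stat_tail_def)
qed

lemma abs_cdf_gap_0: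
  assumes x: "1 \<le> x" and xy: "x < y"
  shows "\<bar>cdf_gap x 0 y\<bar> = stat_tail y"
proof -
  have "cdf_gap x 0 y = 1 - cum_mass stat y"
    using x xy by (simp add: cdf_gap_def cum_mass_def sum_subtractf)
  also have "\<dots> = stat_tail y"
    using cum_mass_stat_add_tail[of y] x xy by simp
  finally show ?thesis
    using suminf_nonneg[OF summable_stat_tail stat_nonneg] by (simp add: stat_tail_def)
qed

text \<open>The weight grows like \<open>\<sigma>\<^sup>y\<close> while the stationary tail decays like \<open>\<rho>\<^sup>y = \<sigma>\<^sup>-\<^sup>2\<^sup>y\<close>.\<close>
lemma summable_weighted_gap_0:
  assumes x: "1 \<le> x" shows "summable (weighted_gap x 0)"
proof -
  define E where "E = lyap_const * L ^ y0 / (1 - \<rho>)"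
  define \<nu> where "\<nu> = 1 / \<sigma>"
  have nu: "0 < \<nu>" "\<nu> < 1" using sigma_gt_1 by (auto simp: \<nu>_def)
  have "\<sigma> * \<rho> = \<sigma> / (\<sigma> * \<sigma>)"
    by (simp add: \<rho>_def sigma_sq)
  then have sigma_rho: "\<sigma> * \<rho> = \<nu>"
    using sigma_gt_1 by (simp add: \<nu>_def)
  have geom: "summable (\<lambda>k. E * \<nu> ^ (k + 2))"
    using nu by (intro summable_mult summable_ignore_initial_segment summable_geometric) simp
  show ?thesis
  proof (rule summable_comparison_test'[OF geom, of "x + 1"])
    fix k assume k: "x + 1 \<le> k"
    have "norm (weighted_gap x 0 k) = lyap (k + 2) * stat_tail (k + 2)"
      using abs_cdf_gap_0[OF x, of "k + 2"] k lyap_ge_1[of "k + 2"] by (simp add: weighted_gap_def)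
    also have "\<dots> \<le> (lyap_const * \<sigma> ^ (k + 2)) * (L ^ y0 * \<rho> ^ (k + 2) / (1 - \<rho>))"
    proof (rule mult_mono)
      show "lyap (k + 2) \<le> lyap_const * \<sigma> ^ (k + 2)"
        using lyap_le_power[of "k + 2"] k x by simp
      show "stat_tail (k + 2) \<le> L ^ y0 * \<rho> ^ (k + 2) / (1 - \<rho>)"
        by (rule stat_tail_le)
      show "0 \<le> lyap_const * \<sigma> ^ (k + 2)"
        using lyap_const_pos sigma_gt_1 by simp
      show "0 \<le> stat_tail (k + 2)"
        unfolding stat_tail_def by (rule suminf_nonneg[OF summable_stat_tail stat_nonneg])
    qed
    also have "\<dots> = E * (\<sigma> * \<rho>) ^ (k + 2)"
      by (simp add: E_def power_mult_distrib)
    finally show "norm (weighted_gap x 0 k) \<le> E * \<nu> ^ (k + 2)"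
      by (simp only: sigma_rho)
  qed
qed

theorem geometrically_ergodic: "geom_ergodic K"
proof -
  define V where "V x = 1 + suminf (weighted_gap x 0)" for x
  have tv: "tv_dist (kernel_pow K n x) stat \<le> 2 * V x * contraction ^ n" if x: "1 \<le> x" for x n
  proof -
    have gap: "summable (weighted_gap x n)"
      "suminf (weighted_gap x n) \<le> contraction ^ n * suminf (weighted_gap x 0)"
      using weighted_gap_geometric[OF summable_weighted_gap_0[OF x]] by auto
    have abs_le: "\<bar>cdf_gap x n (k + 2)\<bar> \<le> weighted_gap x n k" for k
      using lyap_ge_1[of "k + 2"] by (simp add: weighted_gap_def mult_le_cancel_right1)
    have sum_abs: "summable (\<lambda>k. \<bar>cdf_gap x n (k + 2)\<bar>)"
      by (rule summable_comparison_test'[OF gap(1), of 0]) (use abs_le in simp)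
    have "tv_dist (kernel_pow K n x) stat \<le> 2 * (\<Sum>k. \<bar>cdf_gap x n (k + 2)\<bar>)"
      using tv_dist_le_cum_mass[OF kernel_pow_summable_on[OF x]] stat_prob sum_abs
      by (simp add: prob_on_posN_def cdf_gap_def)
    also have "\<dots> \<le> 2 * (contraction ^ n * suminf (weighted_gap x 0))"
      using suminf_le[OF abs_le sum_abs gap(1)] gap(2) by simp
    also have "\<dots> \<le> 2 * V x * contraction ^ n"
      using contraction_nonneg by (simp add: V_def algebra_simps)
    finally show ?thesis .
  qed
  have "1 \<le> V x" if "1 \<le> x" for x
    using suminf_nonneg[OF summable_weighted_gap_0[OF that] weighted_gap_nonneg]
    by (simp add: V_def)
  then show ?thesis
    unfolding geom_ergodic_def using stat_prob stat_invariant contraction_nonneg contraction_lt_1 tv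
    by (intro exI[of _ stat] exI[of _ V] exI[of _ contraction] exI[of _ 2]) simp
qed

end

subsection \<open>Noisy acceptance probabilities\<close>

locale unit_mean_weights =
  fixes Q :: "real measure"
  assumes prob: "prob_space Q" and sets_Q: "sets Q = sets borel"
    and weight_pos: "AE w in Q. 0 < w" and integrable_weight: "integrable Q (\<lambda>w. w)"
    and weight_mean: "(\<integral>w. w \<partial>Q) = 1"
begin

lemma borel_measurable_Q: "f \<in> borel_measurable borel \<Longrightarrow> f \<in> borel_measurable Q"
  by (simp add: measurable_cong_sets[OF sets_Q refl])

lemma integrable_const_Q: "integrable Q (\<lambda>_. c :: real)"
  using prob_space.finite_measure[OF prob] by (simp add: finite_measure.integrable_const)

lemma integral_1_Q: "(\<integral>_. (1::real) \<partial>Q) = 1"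
  using prob_space.prob_space[OF prob] by simp

lemma not_AE_False_Q: "\<not> (AE x in Q. False)"
  using prob_space.AE_False[OF prob] by simp

lemma weight_pos_nonnull: "\<not> (AE w in Q. \<not> 0 < w)"
proof
  assume "AE w in Q. \<not> 0 < w"
  with weight_pos have "AE w in Q. False" by eventually_elim auto
  with not_AE_False_Q show False ..
qed

lemma weight_ge_1_nonnull: "\<not> (AE w in Q. \<not> 1 \<le> w)"
proof
  assume lt: "AE w in Q. \<not> 1 \<le> w"
  have "0 < (\<integral>w. 1 - w \<partial>Q)"
    using lt not_AE_False_Q
    by (intro integral_pos_if_pos_on_nonnull[where P = "\<lambda>_. True"]
        Bochner_Integration.integrable_diff integrable_const_Q integrable_weight) auto
  then show False
    using Bochner_Integration.integral_diff[OF integrable_const_Q integrable_weight]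
      integral_1_Q weight_mean by simp
qed

lemma weight_le_1_nonnull: "\<not> (AE w in Q. \<not> w \<le> 1)"
proof
  assume gt: "AE w in Q. \<not> w \<le> 1"
  have "0 < (\<integral>w. w - 1 \<partial>Q)"
    using gt not_AE_False_Q
    by (intro integral_pos_if_pos_on_nonnull[where P = "\<lambda>_. True"]
        Bochner_Integration.integrable_diff integrable_const_Q integrable_weight) auto
  then show False
    using Bochner_Integration.integral_diff[OF integrable_weight integrable_const_Q]
      integral_1_Q weight_mean by simp
qed

definition inner_acc :: "real \<Rightarrow> real" where
  "inner_acc c = (\<integral>u. min 1 (c * u) \<partial>Q)"

lemma integrable_min_1: "integrable Q (\<lambda>u. min 1 (c * u))"
proof (rule Bochner_Integration.integrable_bound)
  show "integrable Q (\<lambda>u. 1 + \<bar>c\<bar> * \<bar>u\<bar>)"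
  proof -
    have "integrable Q (\<lambda>u. \<bar>c\<bar> * \<bar>u\<bar>)"
      using integrable_weight by (intro Bochner_Integration.integrable_mult_right) simp
    then show ?thesis by (rule Bochner_Integration.integrable_add[OF integrable_const_Q])
  qed
  show "(\<lambda>u. min 1 (c * u)) \<in> borel_measurable Q" by (intro borel_measurable_Q) measurable
  show "AE x in Q. norm (min 1 (c * x)) \<le> norm (1 + \<bar>c\<bar> * \<bar>x\<bar>)"
  proof (intro AE_I2)
    fix x :: real
    have "\<bar>c * x\<bar> = \<bar>c\<bar> * \<bar>x\<bar>" by (rule abs_mult)
    moreover have "0 \<le> \<bar>c\<bar> * \<bar>x\<bar>" by simp
    ultimately show "norm (min 1 (c * x)) \<le> norm (1 + \<bar>c\<bar> * \<bar>x\<bar>)"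
      by (cases "1 \<le> c * x") (simp_all add: min_def)
  qed
qed

lemma noisy_acc_eq: "noisy_acc Q r = (\<integral>w. inner_acc (r / w) \<partial>Q)"
  unfolding noisy_acc_def inner_acc_def by simp

lemma inner_acc_mono: "mono inner_acc"
proof (rule monoI)
  fix c c' :: real assume cc: "c \<le> c'"
  show "inner_acc c \<le> inner_acc c'" unfolding inner_acc_def
  proof (rule integral_mono_AE[OF integrable_min_1 integrable_min_1])
    show "AE x in Q. min 1 (c * x) \<le> min 1 (c' * x)"
      using weight_pos
    proof eventually_elim
      case (elim x)
      have "c * x \<le> c' * x" using cc elim by (intro mult_right_mono) auto
      then show ?case by (rule min.mono[OF order_refl])
    qed
  qed
qed

lemma borel_measurable_inner_acc: "inner_acc \<in> borel_measurable borel"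
  by (rule borel_measurable_mono[OF inner_acc_mono])

lemma inner_acc_nonneg: "0 \<le> c \<Longrightarrow> 0 \<le> inner_acc c"
  unfolding inner_acc_def by (rule integral_nonneg_AE) (use weight_pos in \<open>eventually_elim, auto\<close>)

lemma inner_acc_le_1: "inner_acc c \<le> 1"
proof -
  have "inner_acc c \<le> (\<integral>_. (1::real) \<partial>Q)" unfolding inner_acc_def
    by (rule integral_mono_AE[OF integrable_min_1 integrable_const_Q]) auto
  then show ?thesis using integral_1_Q by simp
qed

lemma inner_acc_pos: "0 < c \<Longrightarrow> 0 < inner_acc c"
  unfolding inner_acc_def
proof (rule integral_pos_if_pos_on_nonnull[OF integrable_min_1, where P="\<lambda>u. 0 < u"])
  assume c: "0 < c"
  show "AE x in Q. 0 \<le> min 1 (c * x)" using weight_pos by eventually_elim (use c in auto)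
  show "\<not> (AE x in Q. \<not> 0 < x)" by (rule weight_pos_nonnull)
  show "AE x in Q. 0 < x \<longrightarrow> 0 < min 1 (c * x)" using c by auto
qed

lemma integrable_inner_acc:
  assumes r: "0 \<le> r" shows "integrable Q (\<lambda>w. inner_acc (r / w))"
proof (rule Bochner_Integration.integrable_bound[OF integrable_const_Q[of 1]])
  show "(\<lambda>w. inner_acc (r / w)) \<in> borel_measurable Q"
  proof (intro borel_measurable_Q)
    have "(\<lambda>w. r / w) \<in> borel_measurable borel" by measurable
    then show "(\<lambda>w. inner_acc (r / w)) \<in> borel_measurable borel"
      by (rule measurable_compose[OF _ borel_measurable_inner_acc])
  qed
  show "AE x in Q. norm (inner_acc (r / x)) \<le> norm (1::real)"
    using weight_pos
  proof eventually_elim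
    case (elim x)
    then have "0 \<le> r / x" using r by simp
    then show ?case using inner_acc_nonneg[of "r/x"] inner_acc_le_1[of "r/x"] by simp
  qed
qed

lemma noisy_acc_le_1: "0 \<le> r \<Longrightarrow> noisy_acc Q r \<le> 1"
proof -
  assume r: "0 \<le> r"
  have "noisy_acc Q r \<le> (\<integral>_. (1::real) \<partial>Q)" unfolding noisy_acc_eq
    by (rule integral_mono_AE[OF integrable_inner_acc[OF r] integrable_const_Q])
      (simp add: inner_acc_le_1)
  then show ?thesis using integral_1_Q by simp
qed

lemma noisy_acc_pos:
  assumes r: "0 < r" shows "0 < noisy_acc Q r"
  unfolding noisy_acc_eq
proof (rule integral_pos_if_pos_on_nonnull[OF integrable_inner_acc, where P="\<lambda>u. 0 < u"])
  show "0 \<le> r" using r by simp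
  show "AE x in Q. 0 \<le> inner_acc (r / x)"
    using weight_pos by eventually_elim (use r in \<open>simp add: inner_acc_nonneg\<close>)
  show "\<not> (AE x in Q. \<not> 0 < x)" by (rule weight_pos_nonnull)
  show "AE x in Q. 0 < x \<longrightarrow> 0 < inner_acc (r / x)" using r by (auto intro!: AE_I2 inner_acc_pos)
qed

lemma noisy_acc_mono:
  assumes r: "0 \<le> r" and rs: "r \<le> s" shows "noisy_acc Q r \<le> noisy_acc Q s"
  unfolding noisy_acc_eq
proof (rule integral_mono_AE[OF integrable_inner_acc integrable_inner_acc])
  show "0 \<le> r" "0 \<le> s" using r rs by auto
  show "AE x in Q. inner_acc (r / x) \<le> inner_acc (s / x)" using weight_pos
  proof eventually_elim
    case (elim x)
    then have "r / x \<le> s / x" using rs by (simp add: divide_right_mono)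
    then show ?case using inner_acc_mono by (simp add: monoD)
  qed
qed

text \<open>On the event \<open>U \<le> 1\<close>, of positive probability, the smaller ratio stays strictly below
  the threshold 1, so the two acceptance probabilities differ there.\<close>
lemma inner_acc_inverse_less:
  assumes r: "1 < r" and w: "1 \<le> w"
  shows "inner_acc (1 / r / w) < inner_acc (r / w)"
proof -
  define c where "c = r / w"
  define c' where "c' = 1 / r / w"
  have "0 < c'" "c' < c" "c' \<le> 1 / r"
    using r w less_1_mult[OF r r] by (auto simp: c_def c'_def field_simps)
  have "0 < (\<integral>u. min 1 (c * u) - min 1 (c' * u) \<partial>Q)"
  proof (rule integral_pos_if_pos_on_nonnull[where P = "\<lambda>u. u \<le> 1"])
    show "integrable Q (\<lambda>u. min 1 (c * u) - min 1 (c' * u))"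
      by (intro Bochner_Integration.integrable_diff integrable_min_1)
    show "\<not> (AE u in Q. \<not> u \<le> 1)" by (rule weight_le_1_nonnull)
    show "AE u in Q. 0 \<le> min 1 (c * u) - min 1 (c' * u)"
      using weight_pos
    proof eventually_elim
      case (elim u)
      then have "c' * u \<le> c * u" using \<open>c' < c\<close> by (intro mult_right_mono) auto
      then show ?case by (simp add: min_def)
    qed
    show "AE u in Q. u \<le> 1 \<longrightarrow> 0 < min 1 (c * u) - min 1 (c' * u)"
      using weight_pos
    proof eventually_elim
      case (elim u)
      show ?case
      proof
        assume "u \<le> 1"
        then have "c' * u \<le> c'" using \<open>0 < c'\<close> by (simp add: mult_left_le)
        moreover have "1 / r < 1" using r by simp
        ultimately have "c' * u < 1" using \<open>c' \<le> 1 / r\<close> by linarith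
        moreover have "c' * u < c * u" using \<open>c' < c\<close> elim by simp
        ultimately show "0 < min 1 (c * u) - min 1 (c' * u)" by (simp add: min_def)
      qed
    qed
  qed
  then have "0 < inner_acc c - inner_acc c'"
    unfolding inner_acc_def
    using Bochner_Integration.integral_diff[OF integrable_min_1 integrable_min_1, of c c'] by simp
  then show ?thesis by (simp add: c_def c'_def)
qed

lemma noisy_acc_inverse_less:
  assumes r: "1 < r" shows "noisy_acc Q (1 / r) < noisy_acc Q r"
proof -
  have r0: "0 \<le> r" "0 \<le> 1 / r" using r by auto
  have "0 < (\<integral>w. inner_acc (r / w) - inner_acc (1 / r / w) \<partial>Q)"
  proof (rule integral_pos_if_pos_on_nonnull[where P = "\<lambda>w. 1 \<le> w"])
    show "integrable Q (\<lambda>w. inner_acc (r / w) - inner_acc (1 / r / w))"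
      using r0 by (intro Bochner_Integration.integrable_diff integrable_inner_acc)
    show "\<not> (AE x in Q. \<not> 1 \<le> x)" by (rule weight_ge_1_nonnull)
    show "AE x in Q. 0 \<le> inner_acc (r / x) - inner_acc (1 / r / x)" using weight_pos
    proof eventually_elim
      case (elim x)
      have rr: "1 * 1 \<le> r * r" using r by (intro mult_mono) auto
      have "1 / r / x \<le> r / x" using r elim rr by (intro divide_right_mono) (auto simp: field_simps)
      then show ?case using inner_acc_mono by (simp add: monoD)
    qed
    show "AE x in Q. 1 \<le> x \<longrightarrow> 0 < inner_acc (r / x) - inner_acc (1 / r / x)"
      using inner_acc_inverse_less[OF r] by auto
  qed
  also have "\<dots> = noisy_acc Q r - noisy_acc Q (1 / r)"
    unfolding noisy_acc_eq
    by (rule Bochner_Integration.integral_diff[OF integrable_inner_acc integrable_inner_acc])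
      (use r0 in auto)
  finally show ?thesis by simp
qed

end

subsection \<open>The noisy random-walk kernel\<close>

lemma noisy_move_eq:
  assumes "(\<lambda>m. exp (- h m)) summable_on posN" and "1 \<le> m" "1 \<le> y"
  shows "noisy_move h Q m y = 1/2 * noisy_acc Q (exp (h m - h y))"
proof -
  define Z where "Z = (\<Sum>\<^sub>\<infinity>k\<in>posN. exp (- h k))"
  have "exp (- h 1) \<le> Z"
    using finite_sum_le_infsum[OF assms(1), of "{1}"] by (simp add: Z_def)
  then have "0 < Z"
    using exp_gt_zero[of "- h 1"] by linarith
  then have "target h y * (1/2) / (target h m * (1/2)) = exp (- h y) / exp (- h m)"
    using assms(2,3) by (simp add: target_def Z_def)
  also have "\<dots> = exp (h m - h y)"
    by (simp add: exp_diff exp_minus field_simps)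
  finally show ?thesis
    using assms(3) by (simp add: noisy_move_def)
qed

lemma convex_increment_mono:
  fixes h :: "nat \<Rightarrow> real"
  assumes convex: "\<forall>m\<ge>2. 2 * h m \<le> h (m - 1) + h (m + 1)" and "1 \<le> m" "m \<le> n"
  shows "h (m + 1) - h m \<le> h (n + 1) - h n"
  using assms(3,2)
proof (induction n rule: dec_induct)
  case (step n)
  have "2 * h (n + 1) \<le> h n + h (n + 2)"
    using convex[rule_format, of "n + 1"] step by simp
  with step show ?case by simp
qed simp

lemma summable_exp_neg_imp_increase:
  fixes h :: "nat \<Rightarrow> real"
  assumes summable: "(\<lambda>m. exp (- h m)) summable_on posN"
  shows "\<exists>m\<ge>1. h m < h (m + 1)"
proof (rule ccontr)
  assume "\<not> ?thesis"
  then have decreasing: "h (m + 1) \<le> h m" if "1 \<le> m" for m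
    using that by (simp add: not_less)
  have "h m \<le> h 1" if "1 \<le> m" for m
    using that
  proof (induction m rule: dec_induct)
    case (step n) then show ?case using decreasing[of n] by simp
  qed simp
  then have lower: "exp (- h 1) \<le> exp (- h m)" if "1 \<le> m" for m
    using that by simp
  define Z where "Z = (\<Sum>\<^sub>\<infinity>k\<in>posN. exp (- h k))"
  define N where "N = nat \<lceil>Z / exp (- h 1)\<rceil> + 1"
  have "Z / exp (- h 1) < real N"
    unfolding N_def by linarith
  then have "Z < real N * exp (- h 1)"
    by (simp add: divide_less_eq)
  also have "\<dots> \<le> (\<Sum>m\<in>{1..N}. exp (- h m))"
    using sum_mono[of "{1..N}" "\<lambda>_. exp (- h 1)"] lower by simp
  also have "\<dots> \<le> Z"
    unfolding Z_def by (rule finite_sum_le_infsum[OF summable]) auto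
  finally show False by simp
qed

locale noisy_random_walk = unit_mean_weights +
  fixes h :: "nat \<Rightarrow> real"
  assumes convex: "\<forall>m\<ge>2. 2 * h m \<le> h (m - 1) + h (m + 1)"
    and summable_exp: "(\<lambda>m. exp (- h m)) summable_on posN"
begin

definition up :: "nat \<Rightarrow> real" where "up m = noisy_move h Q m (m + 1)"
definition down :: "nat \<Rightarrow> real" where "down m = noisy_move h Q m (m - 1)"
definition incr :: "nat \<Rightarrow> real" where "incr m = h (m + 1) - h m"

lemma up_eq: "1 \<le> m \<Longrightarrow> up m = 1/2 * noisy_acc Q (exp (- incr m))"
  using noisy_move_eq[OF summable_exp, of m "m + 1"] by (simp add: up_def incr_def)

lemma down_eq: "2 \<le> m \<Longrightarrow> down m = 1/2 * noisy_acc Q (exp (incr (m - 1)))"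
  using noisy_move_eq[OF summable_exp, of m "m - 1"] by (simp add: down_def incr_def)

lemma incr_mono: "1 \<le> m \<Longrightarrow> m \<le> n \<Longrightarrow> incr m \<le> incr n"
  using convex_increment_mono[OF convex] by (simp add: incr_def)

definition rising_point :: nat where "rising_point = (SOME m. 1 \<le> m \<and> 0 < incr m)"

lemma rising_point: "1 \<le> rising_point" "0 < incr rising_point"
  using someI_ex[OF summable_exp_neg_imp_increase[OF summable_exp]]
  by (simp_all add: rising_point_def incr_def)

definition drift :: real where
  "drift = noisy_acc Q (exp (incr rising_point)) / noisy_acc Q (exp (- incr rising_point))"

lemma drift_gt_1: "1 < drift"
proof -
  have "noisy_acc Q (1 / exp (incr rising_point)) < noisy_acc Q (exp (incr rising_point))"
    by (rule noisy_acc_inverse_less) (use rising_point in simp)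
  then show ?thesis
    using noisy_acc_pos[of "exp (- incr rising_point)"]
    by (simp add: drift_def exp_minus inverse_eq_divide)
qed

text \<open>By convexity all increments from \<open>rising_point\<close> on are at least
  \<open>incr rising_point > 0\<close>; this bounds the upward moves from above and the downward ones from
  below.\<close>
lemma tail_drift:
  assumes y: "max 3 (rising_point + 2) \<le> y"
  shows "drift * up y \<le> down (y - 1)"
proof -
  have pos: "0 < noisy_acc Q (exp (- incr rising_point))"
    by (simp add: noisy_acc_pos)
  have "up y \<le> 1/2 * noisy_acc Q (exp (- incr rising_point))"
    using up_eq[of y] y rising_point incr_mono[of rising_point y] by (simp add: noisy_acc_mono)
  then have "drift * up y \<le> drift * (1/2 * noisy_acc Q (exp (- incr rising_point)))"
    using drift_gt_1 by simp
  also have "\<dots> = 1/2 * noisy_acc Q (exp (incr rising_point))"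
    using pos by (simp add: drift_def)
  also have "\<dots> \<le> down (y - 1)"
    using down_eq[of "y - 1"] y rising_point incr_mono[of rising_point "y - 2"]
    by (simp add: noisy_acc_mono numeral_2_eq_2)
  finally show ?thesis .
qed

lemma noisy_kernel_monotone_birth_death:
  "monotone_birth_death (noisy_kernel h Q) up down drift (max 3 (rising_point + 2))"
proof
  show "birth_death (noisy_kernel h Q) up down"
    unfolding birth_death_def noisy_kernel_def up_def down_def by auto
  show "down 1 = 0"
    by (simp add: down_def noisy_move_def)
  fix m :: nat
  show "1 \<le> m \<Longrightarrow> 0 < up m" "1 \<le> m \<Longrightarrow> up m \<le> 1/2"
    by (simp_all add: up_eq noisy_acc_pos noisy_acc_le_1)
  show "2 \<le> m \<Longrightarrow> 0 < down m" "2 \<le> m \<Longrightarrow> down m \<le> 1/2"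
    by (simp_all add: down_eq noisy_acc_pos noisy_acc_le_1)
  show "1 \<le> m \<Longrightarrow> up (m + 1) \<le> up m"
    using incr_mono[of m "m + 1"] by (simp add: up_eq noisy_acc_mono)
  show "2 \<le> m \<Longrightarrow> down m \<le> down (m + 1)"
    using incr_mono[of "m - 1" m] by (simp add: down_eq noisy_acc_mono)
qed (use drift_gt_1 tail_drift in auto)

end

theorem proposition2p1:
  fixes h :: "nat \<Rightarrow> real" and Q :: "real measure"
  assumes convex: "\<forall>m\<ge>2. 2 * h m \<le> h (m - 1) + h (m + 1)"
    and normalisable: "(\<lambda>m. exp (- h m)) summable_on posN"
    and Q_prob: "prob_space Q" and Q_sets: "sets Q = sets borel"
    and W_pos: "AE w in Q. 0 < w"
    and W_int: "integrable Q (\<lambda>w. w)"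
    and W_mean: "(\<integral>w. w \<partial>Q) = 1"
  shows "geom_ergodic (noisy_kernel h Q)"
proof -
  interpret noisy_random_walk Q h
    using Q_prob Q_sets W_pos W_int W_mean convex normalisable
    by (simp add: noisy_random_walk_def noisy_random_walk_axioms_def unit_mean_weights_def)
  show ?thesis
    using noisy_kernel_monotone_birth_death by (rule monotone_birth_death.geometrically_ergodic)
qed

end
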